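(* Let $(X,d)$ be a compact metric space, $f_{0,\infty}=\{f_n\}_{n=0}^\infty$ a sequence of continuous self-maps of $X$, $A=\{a_i\}_{i=1}^{\infty}\in\mathcal{S}$, $nA=\{na_i\}_{i=1}^{\infty}$, and $\sigma(a_1,a_2,\dots)=(a_2,a_3,\dots)$ the shift. Then (i) $h_{A}(f_{0,\infty}^{n})=h_{nA}(f_{0,\infty})$ for all $n\geq1$; (ii) $h_A(f_{0,\infty})=h_{\sigma^k(A)}(f_{0,\infty})$ for all $k\geq1$.
   Context: $f_i^n=f_{i+n-1}\circ\cdots\circ f_i$ ($n\ge1$), $f_i^0=\mathrm{id}$, $f_i^{-n}(B)=(f_i^n)^{-1}(B)$. The $n$-th compositions system is $f_{0,\infty}^n=\{f_{kn}^n\}_{k=0}^\infty$, i.e. the sequence of maps $f_{kn+n-1}\circ\cdots\circ f_{kn}$, $k\ge0$. $\mathcal S$ is the set of strictly increasing sequences of nonnegative integers. For a sequence of continuous self-maps $g_{0,\infty}$ and $A\in\mathcal S$, $h_A(g_{0,\infty})=\sup_{\mathscr A}\limsup_{m\to\infty}\frac1m\log\mathcal N(\bigvee_{i=1}^m g_0^{-a_i}\mathscr A)$ over finite open covers $\mathscr A$, with $\bigvee$ the common refinement and $\mathcal N$ the minimal cardinality of a subcover. *)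

theory Defs
  imports "HOL-Analysis.Analysis"
begin

fun fcomp :: "(nat \<Rightarrow> 'a \<Rightarrow> 'a) \<Rightarrow> nat \<Rightarrow> nat \<Rightarrow> 'a \<Rightarrow> 'a" where
  "fcomp f i 0 = id"
| "fcomp f i (Suc n) = f (i + n) \<circ> fcomp f i n"

definition ncomp :: "(nat \<Rightarrow> 'a \<Rightarrow> 'a) \<Rightarrow> nat \<Rightarrow> nat \<Rightarrow> 'a \<Rightarrow> 'a" where
  "ncomp f n = (\<lambda>k. fcomp f (k * n) n)"

definition open_covers :: "'a::topological_space set set set" where
  "open_covers = {\<A>. finite \<A> \<and> (\<forall>U\<in>\<A>. open U) \<and> \<Union>\<A> = UNIV}"

definition join_covers :: "(nat \<Rightarrow> 'a set set) \<Rightarrow> nat \<Rightarrow> 'a set set" where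
  "join_covers C m = {\<Inter>i\<in>{..<m}. V i | V. \<forall>i<m. V i \<in> C i}"

definition ncov :: "'a set set \<Rightarrow> nat" where
  "ncov \<U> = Inf {card \<V> | \<V>. \<V> \<subseteq> \<U> \<and> finite \<V> \<and> \<Union>\<V> = UNIV}"

text \<open>Sequence entropy h_A(g) for A = (a_1, a_2, ...) represented 0-indexed:
  a 0 = a_1, a 1 = a_2, ...\<close>
definition seq_entropy :: "(nat \<Rightarrow> 'a::topological_space \<Rightarrow> 'a) \<Rightarrow> (nat \<Rightarrow> nat) \<Rightarrow> ereal" where
  "seq_entropy g a = (SUP \<A>\<in>open_covers.
      limsup (\<lambda>m. ereal (ln (real (ncov (join_covers (\<lambda>i. (\<lambda>U. fcomp g 0 (a i) -` U) ` \<A>) m))) / real m)))"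

end

theory Submission
  imports Defs
begin

(* Part (i) is a reindexing: the m-th composite of the n-th compositions system is f_0^{mn}, so
   both entropies are computed from literally the same covers.
   For (ii), fix a finite open cover, let c(m) be the minimal size of a subcover of the join of the
   first m preimage covers and d(m) the same quantity for the sequence shifted by k. The join of
   k + m covers refines the join of the last m of them, and intersecting minimal subcovers of the
   first k and of the last m joins gives a subcover, so d(m) <= c(k + m) <= c(k) d(m); moreover
   d(m) <= |cover|^m. Hence ln c(k + m) / (k + m) and ln d(m) / m differ by O(1/m), and the
   limsups agree. *)

lemma fcomp_add: "fcomp f i (p + q) = fcomp f (i + p) q \<circ> fcomp f i p"
  by (induction q) (auto simp: add.assoc)

lemma fcomp_ncomp: "fcomp (ncomp f n) 0 m = fcomp f 0 (m * n)"
proof (induction m)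
  case (Suc m)
  then show ?case using fcomp_add[of f 0 "m * n" n] by (simp add: ncomp_def add.commute)
qed simp

definition finite_cover :: "'a set set \<Rightarrow> bool" where
  "finite_cover \<U> \<longleftrightarrow> finite \<U> \<and> \<Union>\<U> = UNIV"

lemma ncov_attained:
  assumes "finite_cover \<U>"
  obtains \<V> where "\<V> \<subseteq> \<U>" "finite_cover \<V>" "card \<V> = ncov \<U>"
proof -
  let ?S = "{card \<V> | \<V>. \<V> \<subseteq> \<U> \<and> finite \<V> \<and> \<Union>\<V> = UNIV}"
  have "card \<U> \<in> ?S"
    using assms unfolding finite_cover_def by blast
  then have "Inf ?S \<in> ?S"
    by (intro Inf_nat_def1) blast
  then obtain \<V> where "\<V> \<subseteq> \<U>" "finite \<V>" "\<Union>\<V> = UNIV" "card \<V> = Inf ?S"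
    by auto
  then show ?thesis using that by (simp add: finite_cover_def ncov_def)
qed

lemma ncov_pos:
  assumes "finite_cover \<U>"
  shows "0 < ncov \<U>"
proof -
  obtain \<V> where \<V>: "\<V> \<subseteq> \<U>" "finite_cover \<V>" "card \<V> = ncov \<U>"
    using ncov_attained[OF assms] by blast
  have "\<V> \<noteq> {}"
    using \<V>(2) unfolding finite_cover_def by force
  then show ?thesis
    using \<V>(2) unfolding finite_cover_def by (simp add: card_gt_0_iff flip: \<V>(3))
qed

lemma ncov_le_card:
  assumes "\<V> \<subseteq> \<U>" "finite_cover \<V>"
  shows "ncov \<U> \<le> card \<V>"
  unfolding ncov_def using assms by (intro cInf_lower) (auto simp: finite_cover_def)

lemma ncov_le_ncov_refinement:
  assumes "finite_cover \<W>" and refines: "\<forall>W\<in>\<W>. \<exists>U\<in>\<U>. W \<subseteq> U"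
  shows "ncov \<U> \<le> ncov \<W>"
proof -
  obtain \<V> where \<V>: "\<V> \<subseteq> \<W>" "finite_cover \<V>" "card \<V> = ncov \<W>"
    using ncov_attained[OF assms(1)] by blast
  obtain g where g: "\<forall>W\<in>\<W>. g W \<in> \<U> \<and> W \<subseteq> g W"
    using bchoice[OF refines[unfolded Bex_def]] by blast
  have "\<Union>(g ` \<V>) = UNIV"
    using \<V>(1,2) g unfolding finite_cover_def by blast
  then have "finite_cover (g ` \<V>)"
    using \<V>(2) by (simp add: finite_cover_def)
  then have "ncov \<U> \<le> card (g ` \<V>)"
    using \<V>(1) g by (intro ncov_le_card) auto
  also have "\<dots> \<le> card \<V>"
    using \<V>(2) by (intro card_image_le) (simp add: finite_cover_def)
  finally show ?thesis using \<V>(3) by simp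
qed

lemma join_covers_subset_PiE:
  "join_covers C m \<subseteq> (\<lambda>V. \<Inter>i<m. V i) ` PiE {..<m} C"
proof
  fix W assume "W \<in> join_covers C m"
  then obtain V where V: "W = (\<Inter>i<m. V i)" "\<forall>i<m. V i \<in> C i"
    unfolding join_covers_def by blast
  then have "restrict V {..<m} \<in> PiE {..<m} C" "W = (\<Inter>i<m. restrict V {..<m} i)"
    by auto
  then show "W \<in> (\<lambda>V. \<Inter>i<m. V i) ` PiE {..<m} C" by blast
qed

lemma card_join_covers_le:
  assumes "\<And>i. i < m \<Longrightarrow> finite (C i)"
  shows "finite (join_covers C m)" "card (join_covers C m) \<le> (\<Prod>i<m. card (C i))"
proof -
  have fin: "finite (PiE {..<m} C)" using assms by (intro finite_PiE) auto
  then show "finite (join_covers C m)"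
    by (rule finite_subset[OF join_covers_subset_PiE finite_imageI])
  have "card (join_covers C m) \<le> card ((\<lambda>V. \<Inter>i<m. V i) ` PiE {..<m} C)"
    using fin by (intro card_mono[OF _ join_covers_subset_PiE]) simp
  also have "\<dots> \<le> card (PiE {..<m} C)" using fin by (rule card_image_le)
  finally show "card (join_covers C m) \<le> (\<Prod>i<m. card (C i))" by (simp add: card_PiE)
qed

lemma finite_cover_join_covers:
  assumes "\<And>i. finite_cover (C i)"
  shows "finite_cover (join_covers C m)"
proof -
  have "x \<in> \<Union>(join_covers C m)" for x
  proof -
    have "x \<in> \<Union>(C i)" for i
      using assms by (simp add: finite_cover_def)
    then have "\<forall>i. \<exists>U. U \<in> C i \<and> x \<in> U"
      by blast
    then obtain V where V: "\<forall>i. V i \<in> C i \<and> x \<in> V i"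
      by (rule choice[THEN exE])
    then have "(\<Inter>i<m. V i) \<in> join_covers C m"
      unfolding join_covers_def by blast
    moreover have "x \<in> (\<Inter>i<m. V i)"
      using V by blast
    ultimately show ?thesis by (rule UnionI)
  qed
  moreover have "finite (join_covers C m)"
    using assms by (intro card_join_covers_le(1)) (simp add: finite_cover_def)
  ultimately show ?thesis unfolding finite_cover_def by blast
qed

lemma Int_mem_join_covers:
  assumes "P \<in> join_covers C k" "Q \<in> join_covers (\<lambda>i. C (i + k)) m"
  shows "P \<inter> Q \<in> join_covers C (k + m)"
proof -
  obtain V where V: "P = (\<Inter>i<k. V i)" "\<forall>i<k. V i \<in> C i"
    using assms(1) unfolding join_covers_def by blast
  obtain W where W: "Q = (\<Inter>i<m. W i)" "\<forall>i<m. W i \<in> C (i + k)"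
    using assms(2) unfolding join_covers_def by blast
  define Z where "Z i = (if i < k then V i else W (i - k))" for i
  have Z: "Z i \<in> C i" if "i < k + m" for i
    using V(2) W(2)[rule_format, of "i - k"] that by (cases "i < k") (auto simp: Z_def)
  have split: "{..<k + m} = {..<k} \<union> (\<lambda>i. i + k) ` {0..<m}"
    by (simp add: ivl_disj_un_one(2) add.commute)
  have "(\<Inter>i<k + m. Z i) = (\<Inter>i<k. Z i) \<inter> (\<Inter>i<m. Z (i + k))"
    unfolding split image_Un image_image Inter_Un_distrib atLeast0LessThan ..
  also have "\<dots> = P \<inter> Q"
    unfolding V(1) W(1) Z_def by simp
  finally show ?thesis using Z unfolding join_covers_def by blast
qed

lemma ncov_join_covers_add_le:
  assumes "\<And>i. finite_cover (C i)"
  shows "ncov (join_covers C (k + m))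
           \<le> ncov (join_covers C k) * ncov (join_covers (\<lambda>i. C (i + k)) m)"
proof -
  obtain \<P> where \<P>: "\<P> \<subseteq> join_covers C k" "finite_cover \<P>"
      "card \<P> = ncov (join_covers C k)"
    by (rule ncov_attained[OF finite_cover_join_covers[OF assms]])
  obtain \<Q> where \<Q>: "\<Q> \<subseteq> join_covers (\<lambda>i. C (i + k)) m" "finite_cover \<Q>"
      "card \<Q> = ncov (join_covers (\<lambda>i. C (i + k)) m)"
    by (rule ncov_attained[OF finite_cover_join_covers[of "\<lambda>i. C (i + k)", OF assms]])
  define \<S> where "\<S> = (\<lambda>(P, Q). P \<inter> Q) ` (\<P> \<times> \<Q>)"
  have "\<S> \<subseteq> join_covers C (k + m)"
    using \<P>(1) \<Q>(1) unfolding \<S>_def by (auto intro!: Int_mem_join_covers)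
  moreover have "\<Union>\<S> = UNIV"
  proof -
    have "x \<in> \<Union>\<S>" for x
    proof -
      have "x \<in> \<Union>\<P>" "x \<in> \<Union>\<Q>"
        using \<P>(2) \<Q>(2) by (simp_all add: finite_cover_def)
      then obtain P Q where "P \<in> \<P>" "x \<in> P" "Q \<in> \<Q>" "x \<in> Q"
        by blast
      then have "P \<inter> Q \<in> \<S>" "x \<in> P \<inter> Q"
        unfolding \<S>_def by (auto intro!: image_eqI[of _ _ "(P, Q)"])
      then show ?thesis by (rule UnionI)
    qed
    then show ?thesis by blast
  qed
  moreover have "finite \<S>"
    using \<P>(2) \<Q>(2) by (simp add: finite_cover_def \<S>_def)
  ultimately have "ncov (join_covers C (k + m)) \<le> card \<S>"
    by (intro ncov_le_card) (simp_all add: finite_cover_def)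
  also have "\<dots> \<le> card (\<P> \<times> \<Q>)"
    unfolding \<S>_def using \<P>(2) \<Q>(2) by (intro card_image_le) (simp add: finite_cover_def)
  finally show ?thesis using \<P>(3) \<Q>(3) by (simp add: card_cartesian_product)
qed

lemma ncov_join_covers_shift_le:
  assumes "\<And>i. finite_cover (C i)"
  shows "ncov (join_covers (\<lambda>i. C (i + k)) m) \<le> ncov (join_covers C (k + m))"
proof (rule ncov_le_ncov_refinement[OF finite_cover_join_covers[OF assms]], rule ballI)
  fix W assume "W \<in> join_covers C (k + m)"
  then obtain V where V: "W = (\<Inter>i<k + m. V i)" "\<forall>i<k + m. V i \<in> C i"
    unfolding join_covers_def by blast
  have "(\<Inter>i<m. V (i + k)) \<in> join_covers (\<lambda>i. C (i + k)) m"
    unfolding join_covers_def mem_Collect_eq using V(2)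
    by (intro exI[of _ "\<lambda>i. V (i + k)"] conjI) auto
  moreover have "W \<subseteq> (\<Inter>i<m. V (i + k))"
    unfolding V(1) by (intro INT_greatest INT_lower) simp
  ultimately show "\<exists>U\<in>join_covers (\<lambda>i. C (i + k)) m. W \<subseteq> U" by blast
qed

lemma ncov_join_covers_le_power:
  assumes "\<And>i. finite_cover (C i)" "\<And>i. card (C i) \<le> B"
  shows "ncov (join_covers C m) \<le> B ^ m"
proof -
  have "ncov (join_covers C m) \<le> card (join_covers C m)"
    using finite_cover_join_covers[OF assms(1)] by (rule ncov_le_card[OF order_refl])
  also have "\<dots> \<le> (\<Prod>i<m. card (C i))"
    using assms(1) by (intro card_join_covers_le(2)) (simp add: finite_cover_def)
  also have "\<dots> \<le> (\<Prod>i<m. B)"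
    using assms(2) by (intro prod_mono) simp
  finally show ?thesis by simp
qed

lemma abs_diff_divide_le:
  fixes x y K L M N :: real
  assumes "0 < M" "0 \<le> N" "0 \<le> y" "y \<le> x" "x \<le> K + y" "y \<le> M * L"
  shows "\<bar>x / (M + N) - y / M\<bar> \<le> (K + N * L) / M"
proof -
  have "0 \<le> K" "y / M \<le> L" "0 \<le> N / (M + N)"
    using assms by (simp_all add: divide_le_eq mult.commute)
  then have "0 \<le> L"
    using assms(1,3) by (meson divide_nonneg_pos order_trans)
  have "M + N \<noteq> 0" "M \<noteq> 0"
    using assms(1,2) by auto
  then have "x / (M + N) - y / M = (x - y) / (M + N) - N / (M + N) * (y / M)"
    by (simp add: divide_simps) (simp add: algebra_simps)
  also have "\<bar>\<dots>\<bar> \<le> (x - y) / (M + N) + N / (M + N) * (y / M)"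
    using assms by (intro abs_triangle_ineq4[THEN order_trans]) simp
  also have "\<dots> \<le> K / (M + N) + N / (M + N) * L"
    using assms \<open>y / M \<le> L\<close> \<open>0 \<le> N / (M + N)\<close>
    by (intro add_mono divide_right_mono mult_left_mono) auto
  also have "\<dots> = (K + N * L) / (M + N)"
    by (simp add: add_divide_distrib)
  also have "\<dots> \<le> (K + N * L) / M"
    using assms \<open>0 \<le> K\<close> \<open>0 \<le> L\<close> by (intro divide_left_mono) auto
  finally show ?thesis .
qed

lemma limsup_eq_if_diff_tendsto_0:
  fixes u v :: "nat \<Rightarrow> real"
  assumes "(\<lambda>m. u m - v m) \<longlonglongrightarrow> 0"
  shows "limsup (\<lambda>m. ereal (u m)) = limsup (\<lambda>m. ereal (v m))"
proof -
  have "(\<lambda>m. ereal (u m - v m)) \<longlonglongrightarrow> ereal 0"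
    using assms by (rule tendsto_ereal)
  then have "limsup (\<lambda>m. ereal (u m - v m) + ereal (v m)) = ereal 0 + limsup (\<lambda>m. ereal (v m))"
    by (rule ereal_limsup_lim_add) simp
  then show ?thesis by simp
qed

lemma limsup_ln_over_n_shift_eq:
  fixes c d :: "nat \<Rightarrow> nat"
  assumes d_pos: "\<And>m. 1 \<le> d m"
    and d_le: "\<And>m. d m \<le> c (k + m)"
    and c_le: "\<And>m. c (k + m) \<le> c k * d m"
    and d_bound: "\<And>m. d m \<le> B ^ m"
  shows "limsup (\<lambda>m. ereal (ln (c m) / m)) = limsup (\<lambda>m. ereal (ln (d m) / m))"
proof -
  have "1 \<le> c k" "1 \<le> B"
    using d_pos[of 0] d_le[of 0] d_pos[of 1] d_bound[of 1] by simp_all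
  define D where "D = ln (c k) + k * ln B"
  have "(\<lambda>m. ln (c (m + k)) / real (m + k) - ln (d m) / m) \<longlonglongrightarrow> 0"
  proof (rule Lim_null_comparison[OF _ lim_const_over_n[of D]])
    show "\<forall>\<^sub>F m in sequentially. norm (ln (c (m + k)) / real (m + k) - ln (d m) / m) \<le> D / m"
    proof (rule eventually_sequentiallyI[of 1])
      fix m :: nat assume "1 \<le> m"
      have "real (d m) \<le> c (k + m)" "real (c (k + m)) \<le> c k * d m" "real (d m) \<le> B ^ m"
        using d_le c_le d_bound by (simp_all flip: of_nat_mult of_nat_power)
      then have "ln (d m) \<le> ln (c (k + m))" "ln (c (k + m)) \<le> ln (c k * d m)"
          "ln (d m) \<le> ln (B ^ m)"
        using d_pos[of m] \<open>1 \<le> B\<close> by simp_all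
      moreover have "ln (c k * d m) = ln (c k) + ln (d m)" "ln (B ^ m) = m * ln B"
        using d_pos[of m] \<open>1 \<le> c k\<close> \<open>1 \<le> B\<close> by (simp_all add: ln_mult ln_realpow)
      ultimately have "\<bar>ln (c (k + m)) / (real m + real k) - ln (d m) / m\<bar> \<le> D / m"
        unfolding D_def using \<open>1 \<le> m\<close> d_pos[of m]
        by (intro abs_diff_divide_le) simp_all
      then show "norm (ln (c (m + k)) / real (m + k) - ln (d m) / m) \<le> D / m"
        by (simp add: add.commute)
    qed
  qed
  then have "limsup (\<lambda>m. ereal (ln (c (m + k)) / real (m + k))) = limsup (\<lambda>m. ereal (ln (d m) / m))"
    by (rule limsup_eq_if_diff_tendsto_0)
  then show ?thesis
    using limsup_shift_k[of "\<lambda>m. ereal (ln (c m) / m)" k] by simp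
qed

lemma limsup_ln_ncov_join_covers_shift:
  assumes "\<And>i. finite_cover (C i)" "bdd_above (range (\<lambda>i. card (C i)))"
  shows "limsup (\<lambda>m. ereal (ln (ncov (join_covers C m)) / m))
       = limsup (\<lambda>m. ereal (ln (ncov (join_covers (\<lambda>i. C (i + k)) m)) / m))"
proof -
  obtain B where B: "\<And>i. card (C i) \<le> B"
    using assms(2) by (auto simp: bdd_above_def)
  show ?thesis
  proof (rule limsup_ln_over_n_shift_eq)
    show "1 \<le> ncov (join_covers (\<lambda>i. C (i + k)) m)" for m
      using ncov_pos[OF finite_cover_join_covers[of "\<lambda>i. C (i + k)"]] assms(1)
      by (simp add: Suc_le_eq)
    show "ncov (join_covers (\<lambda>i. C (i + k)) m) \<le> ncov (join_covers C (k + m))" for m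
      using assms(1) by (rule ncov_join_covers_shift_le)
    show "ncov (join_covers C (k + m))
            \<le> ncov (join_covers C k) * ncov (join_covers (\<lambda>i. C (i + k)) m)" for m
      using assms(1) by (rule ncov_join_covers_add_le)
    show "ncov (join_covers (\<lambda>i. C (i + k)) m) \<le> B ^ m" for m
      using assms(1) B by (intro ncov_join_covers_le_power)
  qed
qed

lemma seq_entropy_ncomp: "seq_entropy (ncomp f n) a = seq_entropy f (\<lambda>i. n * a i)"
  unfolding seq_entropy_def fcomp_ncomp by (simp add: mult.commute)

lemma seq_entropy_shift: "seq_entropy g a = seq_entropy g (\<lambda>i. a (i + k))"
  unfolding seq_entropy_def
  by (intro SUP_cong refl limsup_ln_ncov_join_covers_shift)
    (auto simp: open_covers_def finite_cover_def simp flip: vimage_Union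
      intro: bdd_aboveI2 card_image_le)

theorem lemma4p1:
  fixes f :: "nat \<Rightarrow> 'a::metric_space \<Rightarrow> 'a" and a :: "nat \<Rightarrow> nat"
  assumes "compact (UNIV :: 'a set)"
    and "\<And>n. continuous_on UNIV (f n)"
    and "strict_mono a"
  shows "(\<forall>n\<ge>1. seq_entropy (ncomp f n) a = seq_entropy f (\<lambda>i. n * a i))
       \<and> (\<forall>k\<ge>1. seq_entropy f a = seq_entropy f (\<lambda>i. a (i + k)))"
  using seq_entropy_ncomp seq_entropy_shift by blast

end
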